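(* For all $a,b\in\mathbb{B}^n$, \[ \mathrm{th}\left(\frac{\rho_{\mathbb{B}^n}(a,b)}{4}\right)\ge\mathrm{th}\left(\frac{h_{\mathbb{B}^n}(a,b)}{4}\right)\ge\frac{|a-b|}{\sqrt{4-|a+b|^2}}, \] with equality if $a=-b$.
   Context: $\mathbb{B}^n$ is the unit ball of $\mathbb{R}^n$. Hyperbolic metric: $\mathrm{sh}\frac{\rho_{\mathbb{B}^n}(a,b)}{2}=\frac{|a-b|}{\sqrt{(1-|a|^2)(1-|b|^2)}}$. Hilbert metric: for distinct $a,b$ in a bounded convex domain $G\subset\mathbb{R}^n$, let $u,v$ be the intersection points of the line through $a,b$ with $\partial G$, ordered $u,a,b,v$; $h_G(a,b)=\log\frac{|u-b||a-v|}{|u-a||b-v|}$, and $h_G(a,a)=0$. *)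

theory Defs
  imports "HOL-Analysis.Analysis"
begin

definition hyp_ball_dist :: "'a::euclidean_space \<Rightarrow> 'a \<Rightarrow> real" where
  "hyp_ball_dist a b =
     2 * arsinh (norm (a - b) / sqrt ((1 - (norm a)\<^sup>2) * (1 - (norm b)\<^sup>2)))"

text \<open>For distinct a, b the line through
  a, b meets the boundary in u, v with order u, a, b, v: u lies on the ray from b
  through a beyond a, and v lies on the ray from a through b beyond b.\<close>
definition hilbert_dist :: "'a::euclidean_space set \<Rightarrow> 'a \<Rightarrow> 'a \<Rightarrow> real" where
  "hilbert_dist G a b =
     (if a = b then 0 else
      (let u = (THE u. u \<in> frontier G \<and> (\<exists>t::real. t \<ge> 1 \<and> u = b + t *\<^sub>R (a - b)));
           v = (THE v. v \<in> frontier G \<and> (\<exists>t::real. t \<ge> 1 \<and> v = a + t *\<^sub>R (b - a)))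
       in ln ((norm (u - b) * norm (a - v)) / (norm (u - a) * norm (b - v)))))"

end

(*
  Everything happens on the chord that the line through a and b cuts out of the ball.
  Let e be the unit direction of b - a. The chord is centred at the foot of the
  perpendicular from 0 to the line and has half-length r <= 1; measured from that centre,
  a and b have coordinates x = a.e < y = b.e in ]-r, r[. Pythagoras gives
  1 - |a|^2 = r^2 - x^2, 1 - |b|^2 = r^2 - y^2 and 4 - |a + b|^2 = 4 r^2 - (x + y)^2, and
  the Hilbert distance of a, b is the Hilbert distance h of x, y in ]-r, r[.

  With Q = (r^2 - x^2)(r^2 - y^2) one computes sinh (h/2) = r (y - x) / sqrt Q and
  cosh (h/2) = (r^2 - x y) / sqrt Q, while sinh (rho/2) = (y - x) / sqrt Q; so h <= rho
  because r <= 1. Moreover tanh (h/4) = r (y - x) / (r^2 - x y + sqrt Q), and AM-GM for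
  sqrt Q gives r^2 - x y + sqrt Q <= (4 r^2 - (x + y)^2) / 2 <= r sqrt (4 r^2 - (x + y)^2).
  For a = -b the line is a diameter: r = 1 and x + y = 0, and both estimates are equalities.
*)

theory Submission
  imports Defs
begin

text \<open>The cross-ratio of \<^const>\<open>hilbert_dist\<close> for the interval \<open>]-r, r[\<close>, whose boundary
  points are \<open>-r\<close> and \<open>r\<close>.\<close>

definition hilbert_interval :: "real \<Rightarrow> real \<Rightarrow> real \<Rightarrow> real" where
  "hilbert_interval r x y = ln ((r + y) * (r - x) / ((r + x) * (r - y)))"

lemma tanh_half_real: "tanh (t / 2) = sinh t / (1 + cosh t)" for t :: real
proof -
  have "1 + cosh t = 2 * (cosh (t / 2))\<^sup>2" and "sinh t = 2 * sinh (t / 2) * cosh (t / 2)"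
    using cosh_double[of "t / 2"] sinh_double[of "t / 2"] by (simp_all add: cosh_square_eq)
  then show ?thesis
    by (simp add: tanh_def power2_eq_square)
qed

lemma sinh_cosh_half_hilbert_interval:
  fixes r x y :: real
  assumes "\<bar>x\<bar> < r" and "\<bar>y\<bar> < r"
  defines "Q \<equiv> (r\<^sup>2 - x\<^sup>2) * (r\<^sup>2 - y\<^sup>2)"
  shows "sinh (hilbert_interval r x y / 2) = r * (y - x) / sqrt Q"
    and "cosh (hilbert_interval r x y / 2) = (r\<^sup>2 - x * y) / sqrt Q"
proof -
  define P where "P = (r + y) * (r - x)"
  have pos: "r + x > 0" "r - x > 0" "r + y > 0" "r - y > 0"
    using assms(1,2) by auto
  have Q: "Q = P * ((r + x) * (r - y))"
    by (simp add: Q_def P_def power2_eq_square algebra_simps)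
  have P0: "P > 0" and Q0: "Q > 0"
    using pos by (simp_all add: P_def Q)
  have sqrtQ: "sqrt Q * sqrt Q = Q"
    using Q0 by simp
  have "hilbert_interval r x y = ln ((P / sqrt Q)\<^sup>2)"
    using pos sqrtQ by (simp add: hilbert_interval_def P_def Q power_divide power2_eq_square)
  then have half: "hilbert_interval r x y / 2 = ln (P / sqrt Q)"
    using P0 Q0 by (simp add: ln_realpow)
  have sinh_id: "P * P - Q = 2 * r * (y - x) * P" and cosh_id: "P * P + Q = 2 * (r\<^sup>2 - x * y) * P"
    by (simp_all add: Q P_def power2_eq_square algebra_simps)
  have "sinh (hilbert_interval r x y / 2) = (P * P - Q) / (2 * P * sqrt Q)"
    unfolding half using P0 Q0 sqrtQ by (simp add: sinh_ln_real field_simps)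
  also have "\<dots> = r * (y - x) / sqrt Q"
    unfolding sinh_id using P0 Q0 by (simp add: field_simps)
  finally show "sinh (hilbert_interval r x y / 2) = r * (y - x) / sqrt Q" .
  have "cosh (hilbert_interval r x y / 2) = (P * P + Q) / (2 * P * sqrt Q)"
    unfolding half using P0 Q0 sqrtQ by (simp add: cosh_ln_real field_simps)
  also have "\<dots> = (r\<^sup>2 - x * y) / sqrt Q"
    unfolding cosh_id using P0 Q0 by (simp add: field_simps)
  finally show "cosh (hilbert_interval r x y / 2) = (r\<^sup>2 - x * y) / sqrt Q" .
qed

lemma tanh_quarter_hilbert_interval:
  fixes r x y :: real
  assumes "\<bar>x\<bar> < r" and "\<bar>y\<bar> < r"
  shows "tanh (hilbert_interval r x y / 4)
       = r * (y - x) / (r\<^sup>2 - x * y + sqrt ((r\<^sup>2 - x\<^sup>2) * (r\<^sup>2 - y\<^sup>2)))"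
proof -
  define Q where "Q = (r\<^sup>2 - x\<^sup>2) * (r\<^sup>2 - y\<^sup>2)"
  have "x\<^sup>2 < r\<^sup>2" "y\<^sup>2 < r\<^sup>2"
    using assms by (simp_all add: power2_strict_mono)
  then have "sqrt Q > 0"
    by (simp add: Q_def)
  have "tanh (hilbert_interval r x y / 4)
      = sinh (hilbert_interval r x y / 2) / (1 + cosh (hilbert_interval r x y / 2))"
    using tanh_half_real[of "hilbert_interval r x y / 2"] by simp
  also have "\<dots> = (r * (y - x) / sqrt Q) / (1 + (r\<^sup>2 - x * y) / sqrt Q)"
    unfolding sinh_cosh_half_hilbert_interval[OF assms] Q_def ..
  also have "\<dots> = r * (y - x) / (r\<^sup>2 - x * y + sqrt Q)"
    using \<open>sqrt Q > 0\<close> by (simp add: add_divide_eq_iff)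
  finally show ?thesis
    by (simp add: Q_def)
qed

lemma hilbert_interval_le_hyperbolic:
  fixes r x y :: real
  assumes "\<bar>x\<bar> < r" and "\<bar>y\<bar> < r" and "x \<le> y" and "r \<le> 1"
  shows "hilbert_interval r x y \<le> 2 * arsinh ((y - x) / sqrt ((r\<^sup>2 - x\<^sup>2) * (r\<^sup>2 - y\<^sup>2)))"
proof -
  have "x\<^sup>2 < r\<^sup>2" "y\<^sup>2 < r\<^sup>2"
    using assms by (simp_all add: power2_strict_mono)
  then have "sinh (hilbert_interval r x y / 2) \<le> (y - x) / sqrt ((r\<^sup>2 - x\<^sup>2) * (r\<^sup>2 - y\<^sup>2))"
    unfolding sinh_cosh_half_hilbert_interval(1)[OF assms(1,2)]
    using assms by (intro divide_right_mono mult_left_le_one_le) auto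
  then have "hilbert_interval r x y / 2 \<le> arsinh ((y - x) / sqrt ((r\<^sup>2 - x\<^sup>2) * (r\<^sup>2 - y\<^sup>2)))"
    by (metis sinh_arsinh_real sinh_real_le_iff)
  then show ?thesis
    by simp
qed

lemma hilbert_interval_unit_eq_hyperbolic:
  fixes x y :: real
  assumes "\<bar>x\<bar> < 1" and "\<bar>y\<bar> < 1"
  shows "hilbert_interval 1 x y = 2 * arsinh ((y - x) / sqrt ((1 - x\<^sup>2) * (1 - y\<^sup>2)))"
  using arg_cong[OF sinh_cosh_half_hilbert_interval(1)[OF assms], of arsinh]
  by (simp add: arsinh_sinh_real)

lemma tanh_quarter_hilbert_interval_ge:
  fixes r x y :: real
  assumes "\<bar>x\<bar> < r" and "\<bar>y\<bar> < r" and "x \<le> y"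
  shows "(y - x) / sqrt (4 * r\<^sup>2 - (x + y)\<^sup>2) \<le> tanh (hilbert_interval r x y / 4)"
proof -
  define M Q D where "M = r\<^sup>2 - x * y" and "Q = (r\<^sup>2 - x\<^sup>2) * (r\<^sup>2 - y\<^sup>2)"
    and "D = 4 * r\<^sup>2 - (x + y)\<^sup>2"
  have x: "x\<^sup>2 < r\<^sup>2" and y: "y\<^sup>2 < r\<^sup>2"
    using assms by (simp_all add: power2_strict_mono)
  have "sqrt Q \<le> ((r\<^sup>2 - x\<^sup>2) + (r\<^sup>2 - y\<^sup>2)) / 2"
    unfolding Q_def using x y by (intro arith_geo_mean_sqrt) simp_all
  then have M_Q_D: "M + sqrt Q \<le> D / 2"
    by (simp add: M_def D_def power2_eq_square algebra_simps)
  have "\<bar>x * y\<bar> < r * r"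
    using assms by (simp add: abs_mult mult_strict_mono')
  then have "M > 0"
    by (simp add: M_def power2_eq_square)
  moreover have "sqrt Q > 0"
    using x y by (simp add: Q_def)
  moreover have "sqrt D \<le> 2 * r"
  proof -
    have "sqrt D \<le> sqrt ((2 * r)\<^sup>2)"
      by (intro real_sqrt_le_mono) (simp add: D_def power_mult_distrib)
    then show ?thesis
      using real_sqrt_abs[of "2 * r"] assms(1) by linarith
  qed
  ultimately have "D > 0" and "M + sqrt Q > 0"
    using M_Q_D by linarith+
  have "D / 2 \<le> r * sqrt D"
    using mult_right_mono[OF \<open>sqrt D \<le> 2 * r\<close>, of "sqrt D"] \<open>D > 0\<close> by simp
  then have "(y - x) * (M + sqrt Q) \<le> (y - x) * (r * sqrt D)"
    using M_Q_D assms(3) by (intro mult_left_mono) auto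
  then show ?thesis
    unfolding D_def[symmetric] tanh_quarter_hilbert_interval[OF assms(1,2), folded M_def Q_def]
    using \<open>D > 0\<close> \<open>M + sqrt Q > 0\<close> by (simp add: field_simps)
qed

lemma tanh_quarter_hilbert_interval_symmetric:
  fixes r x y :: real
  assumes "\<bar>x\<bar> < r" and "\<bar>y\<bar> < r" and "x + y = 0"
  shows "tanh (hilbert_interval r x y / 4) = (y - x) / sqrt (4 * r\<^sup>2 - (x + y)\<^sup>2)"
proof -
  have "x = - y" and "r > 0"
    using assms by auto
  have "y\<^sup>2 < r\<^sup>2"
    using assms(2) by (simp add: power2_strict_mono)
  then have "sqrt ((r\<^sup>2 - x\<^sup>2) * (r\<^sup>2 - y\<^sup>2)) = r\<^sup>2 - y\<^sup>2"
    using \<open>x = - y\<close> by simp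
  moreover have "sqrt (4 * r\<^sup>2) = 2 * r"
    using \<open>r > 0\<close> by (simp add: real_sqrt_mult)
  ultimately show ?thesis
    unfolding tanh_quarter_hilbert_interval[OF assms(1,2)] using \<open>x = - y\<close> \<open>r > 0\<close>
    by (simp add: power2_eq_square field_simps)
qed

text \<open>For a unit vector \<open>e\<close> and \<open>norm p \<le> 1\<close>, the line through \<open>p\<close> in direction \<open>e\<close> meets
  the unit sphere in the points \<open>p + (\<plusminus>chord_radius p e - p \<bullet> e) *\<^sub>R e\<close>.\<close>

definition chord_radius :: "'a::real_inner \<Rightarrow> 'a \<Rightarrow> real" where
  "chord_radius p e = sqrt (1 - (norm p)\<^sup>2 + (p \<bullet> e)\<^sup>2)"

lemma chord_radius_uminus [simp]: "chord_radius p (- e) = chord_radius p e"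
  by (simp add: chord_radius_def)

lemma chord_radius_sgn_self: "chord_radius p (sgn p) = 1"
proof -
  have "(p \<bullet> sgn p)\<^sup>2 = (norm p)\<^sup>2"
    by (cases "p = 0") (simp_all add: sgn_div_norm dot_square_norm power2_eq_square field_simps)
  then show ?thesis
    by (simp add: chord_radius_def)
qed

lemma chord_radius_le_1:
  assumes "norm e = 1"
  shows "chord_radius p e \<le> 1"
proof -
  have "\<bar>p \<bullet> e\<bar> \<le> norm p"
    using Cauchy_Schwarz_ineq2[of p e] assms by simp
  then have "(p \<bullet> e)\<^sup>2 \<le> (norm p)\<^sup>2"
    by (metis abs_le_square_iff abs_norm_cancel)
  then show ?thesis
    by (simp add: chord_radius_def)
qed

lemma norm_sq_on_chord_line:
  assumes "norm e = 1" and "norm p \<le> 1"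
  shows "(norm (p + t *\<^sub>R e))\<^sup>2 = 1 - (chord_radius p e)\<^sup>2 + (p \<bullet> e + t)\<^sup>2"
proof -
  have "(norm p)\<^sup>2 \<le> 1"
    using assms(2) by (simp add: power_le_one)
  then have "(chord_radius p e)\<^sup>2 = 1 - (norm p)\<^sup>2 + (p \<bullet> e)\<^sup>2"
    by (simp add: chord_radius_def add_nonneg_nonneg)
  moreover have "e \<bullet> e = 1"
    using assms(1) by (simp add: dot_square_norm)
  then have "(norm (p + t *\<^sub>R e))\<^sup>2 = (norm p)\<^sup>2 + 2 * t * (p \<bullet> e) + t\<^sup>2"
    unfolding power2_norm_eq_inner
    by (simp add: inner_add_left inner_add_right inner_commute algebra_simps power2_eq_square)
  ultimately show ?thesis
    by (simp add: power2_eq_square algebra_simps)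
qed

lemma abs_inner_less_chord_radius:
  assumes "norm p < 1"
  shows "\<bar>p \<bullet> e\<bar> < chord_radius p e"
proof -
  have "(norm p)\<^sup>2 < 1"
    using assms by (simp add: power_less_one_iff abs_square_less_1)
  then show ?thesis
    unfolding chord_radius_def by (intro real_less_rsqrt) simp
qed

lemma unit_ball_chord_coordinates:
  fixes a b :: "'a::euclidean_space"
  assumes a: "norm a < 1" and b: "norm b < 1" and "a \<noteq> b"
  defines "e \<equiv> sgn (b - a)"
  defines "r \<equiv> chord_radius a e"
  shows "norm (a - b) = b \<bullet> e - a \<bullet> e"
    and "1 - (norm a)\<^sup>2 = r\<^sup>2 - (a \<bullet> e)\<^sup>2"
    and "1 - (norm b)\<^sup>2 = r\<^sup>2 - (b \<bullet> e)\<^sup>2"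
    and "4 - (norm (a + b))\<^sup>2 = 4 * r\<^sup>2 - (a \<bullet> e + b \<bullet> e)\<^sup>2"
    and "chord_radius b e = r"
    and "\<bar>a \<bullet> e\<bar> < r" and "\<bar>b \<bullet> e\<bar> < r" and "r \<le> 1"
proof -
  define L where "L = norm (b - a)"
  have e: "norm e = 1"
    using \<open>a \<noteq> b\<close> by (simp add: e_def norm_sgn)
  have b_eq: "b = a + L *\<^sub>R e"
    using \<open>a \<noteq> b\<close> by (simp add: e_def L_def sgn_div_norm)
  have "e \<bullet> e = 1"
    using e by (simp add: dot_square_norm)
  then have be: "b \<bullet> e = a \<bullet> e + L"
    by (simp add: b_eq inner_add_left)
  have line: "(norm (a + t *\<^sub>R e))\<^sup>2 = 1 - r\<^sup>2 + (a \<bullet> e + t)\<^sup>2" for t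
    unfolding r_def using norm_sq_on_chord_line[OF e] a by simp
  show "norm (a - b) = b \<bullet> e - a \<bullet> e"
    by (simp add: be L_def norm_minus_commute)
  show "1 - (norm a)\<^sup>2 = r\<^sup>2 - (a \<bullet> e)\<^sup>2"
    using line[of 0] by simp
  show b_sq: "1 - (norm b)\<^sup>2 = r\<^sup>2 - (b \<bullet> e)\<^sup>2"
    using line[of L] by (simp add: be b_eq[symmetric])
  have "a + b = 2 *\<^sub>R (a + (L / 2) *\<^sub>R e)"
    by (simp add: b_eq algebra_simps scaleR_2)
  then have "(norm (a + b))\<^sup>2 = 4 * (norm (a + (L / 2) *\<^sub>R e))\<^sup>2"
    by (simp add: power_mult_distrib)
  then show "4 - (norm (a + b))\<^sup>2 = 4 * r\<^sup>2 - (a \<bullet> e + b \<bullet> e)\<^sup>2"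
    unfolding line be by (simp add: power2_eq_square algebra_simps)
  show "\<bar>a \<bullet> e\<bar> < r"
    using abs_inner_less_chord_radius[OF a] by (simp add: r_def)
  then show b_r: "chord_radius b e = r"
    using b_sq by (simp add: chord_radius_def)
  show "\<bar>b \<bullet> e\<bar> < r"
    using abs_inner_less_chord_radius[OF b, of e] by (simp add: b_r)
  show "r \<le> 1"
    using chord_radius_le_1[OF e] by (simp add: r_def)
qed

lemma unit_ball_ray_exit:
  fixes p q :: "'a::euclidean_space"
  assumes p: "norm p < 1" and q: "norm q < 1" and "p \<noteq> q"
  defines "e \<equiv> sgn (q - p)"
  shows "(THE w. w \<in> frontier (ball 0 1) \<and> (\<exists>t::real. t \<ge> 1 \<and> w = p + t *\<^sub>R (q - p)))
       = p + (chord_radius p e - p \<bullet> e) *\<^sub>R e"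
proof -
  define L r x where "L = norm (q - p)" and "r = chord_radius p e" and "x = p \<bullet> e"
  have L: "L > 0"
    using \<open>p \<noteq> q\<close> by (simp add: L_def)
  have e: "norm e = 1"
    using \<open>p \<noteq> q\<close> by (simp add: e_def norm_sgn)
  have ray: "p + t *\<^sub>R (q - p) = p + (t * L) *\<^sub>R e" for t
    using L by (simp add: e_def L_def sgn_div_norm)
  note chord = unit_ball_chord_coordinates[OF p q \<open>p \<noteq> q\<close>, folded e_def r_def x_def]
  have on_sphere: "p + s *\<^sub>R e \<in> frontier (ball 0 1) \<longleftrightarrow> \<bar>x + s\<bar> = r" for s
  proof -
    have "r \<ge> 0"
      using abs_inner_less_chord_radius[OF p, of e] by (simp add: r_def)
    moreover have "(norm (p + s *\<^sub>R e))\<^sup>2 = 1 - r\<^sup>2 + (x + s)\<^sup>2"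
      using norm_sq_on_chord_line[OF e] p by (simp add: r_def x_def)
    ultimately have "norm (p + s *\<^sub>R e) = 1 \<longleftrightarrow> \<bar>x + s\<bar>\<^sup>2 = r\<^sup>2"
      using power2_eq_iff_nonneg[of "norm (p + s *\<^sub>R e)" 1] by auto
    also have "\<dots> \<longleftrightarrow> \<bar>x + s\<bar> = r"
      using power2_eq_iff_nonneg[OF abs_ge_zero \<open>r \<ge> 0\<close>, of "x + s"] by simp
    finally show ?thesis
      by simp
  qed
  have r_x: "- r < x" "x + L < r"
    using chord(1,6,7) by (simp_all add: L_def norm_minus_commute abs_less_iff)
  show ?thesis
    unfolding r_def[symmetric] x_def[symmetric]
  proof (rule the_equality)
    have "p + (r - x) *\<^sub>R e \<in> frontier (ball 0 1)"
      using on_sphere[of "r - x"] r_x L by simp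
    moreover have "p + (r - x) *\<^sub>R e = p + ((r - x) / L) *\<^sub>R (q - p)" and "(r - x) / L \<ge> 1"
      using r_x L by (simp_all add: ray)
    ultimately show "p + (r - x) *\<^sub>R e \<in> frontier (ball 0 1)
        \<and> (\<exists>t::real. t \<ge> 1 \<and> p + (r - x) *\<^sub>R e = p + t *\<^sub>R (q - p))"
      by blast
  next
    fix w assume "w \<in> frontier (ball 0 1) \<and> (\<exists>t::real. t \<ge> 1 \<and> w = p + t *\<^sub>R (q - p))"
    then obtain t where t: "t \<ge> 1" and w: "w = p + (t * L) *\<^sub>R e" and "\<bar>x + t * L\<bar> = r"
      using on_sphere ray by metis
    moreover have "L \<le> t * L"
      using t L by simp
    then have "x + t * L > - r"
      using r_x L by linarith
    ultimately have "t * L = r - x"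
      by linarith
    then show "w = p + (r - x) *\<^sub>R e"
      using w by simp
  qed
qed

lemma hilbert_dist_unit_ball:
  fixes a b :: "'a::euclidean_space"
  assumes a: "norm a < 1" and b: "norm b < 1" and "a \<noteq> b"
  defines "e \<equiv> sgn (b - a)"
  shows "hilbert_dist (ball 0 1) a b = hilbert_interval (chord_radius a e) (a \<bullet> e) (b \<bullet> e)"
proof -
  define r x y where "r = chord_radius a e" and "x = a \<bullet> e" and "y = b \<bullet> e"
  note chord = unit_ball_chord_coordinates[OF a b \<open>a \<noteq> b\<close>, folded e_def r_def x_def y_def]
  have e: "norm e = 1"
    using \<open>a \<noteq> b\<close> by (simp add: e_def norm_sgn)
  have order: "- r < x" "x < y" "y < r"
    using chord(1,6,7) \<open>a \<noteq> b\<close> zero_less_norm_iff[of "a - b"] by (auto simp: abs_less_iff)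
  have b_eq: "b = a + (y - x) *\<^sub>R e"
    using order chord(1) by (simp add: e_def sgn_div_norm norm_minus_commute)
  have "sgn (a - b) = - e"
    by (metis e_def minus_diff_eq sgn_minus)
  then have "(THE u. u \<in> frontier (ball 0 1) \<and> (\<exists>t::real. t \<ge> 1 \<and> u = b + t *\<^sub>R (a - b)))
      = b + (r + y) *\<^sub>R (- e)"
    using unit_ball_ray_exit[OF b a] \<open>a \<noteq> b\<close> chord(5) by (simp add: y_def)
  also have "\<dots> = a + (- r - x) *\<^sub>R e"
    by (subst b_eq) (simp add: algebra_simps)
  finally have u: "(THE u. u \<in> frontier (ball 0 1) \<and> (\<exists>t::real. t \<ge> 1 \<and> u = b + t *\<^sub>R (a - b)))
      = a + (- r - x) *\<^sub>R e" .
  have v: "(THE v. v \<in> frontier (ball 0 1) \<and> (\<exists>t::real. t \<ge> 1 \<and> v = a + t *\<^sub>R (b - a)))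
      = a + (r - x) *\<^sub>R e"
    using unit_ball_ray_exit[OF a b \<open>a \<noteq> b\<close>] by (simp add: e_def r_def x_def)
  have dist_on_line: "norm ((a + s *\<^sub>R e) - (a + s' *\<^sub>R e)) = \<bar>s - s'\<bar>" for s s'
    using e by (simp add: scaleR_diff_left[symmetric])
  have "hilbert_dist (ball 0 1) a b = ln (norm (a + (- r - x) *\<^sub>R e - b) * norm (a - (a + (r - x) *\<^sub>R e))
      / (norm (a + (- r - x) *\<^sub>R e - a) * norm (b - (a + (r - x) *\<^sub>R e))))"
    unfolding hilbert_dist_def Let_def u v using \<open>a \<noteq> b\<close> by simp
  also have "\<dots> = ln ((r + y) * (r - x) / ((r + x) * (r - y)))"
    using order dist_on_line[of "- r - x" "y - x"] dist_on_line[of 0 "r - x"]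
      dist_on_line[of "- r - x" 0] dist_on_line[of "y - x" "r - x"]
    by (subst (1 2) b_eq) (simp add: add.commute)
  finally show ?thesis
    by (simp add: hilbert_interval_def r_def x_def y_def)
qed

lemma unit_ball_chord_reduction:
  fixes a b :: "'a::euclidean_space"
  assumes a: "norm a < 1" and b: "norm b < 1" and "a \<noteq> b"
  obtains r x y :: real
  where "\<bar>x\<bar> < r" and "\<bar>y\<bar> < r" and "x \<le> y" and "r \<le> 1"
    and "hyp_ball_dist a b = 2 * arsinh ((y - x) / sqrt ((r\<^sup>2 - x\<^sup>2) * (r\<^sup>2 - y\<^sup>2)))"
    and "hilbert_dist (ball 0 1) a b = hilbert_interval r x y"
    and "norm (a - b) / sqrt (4 - (norm (a + b))\<^sup>2) = (y - x) / sqrt (4 * r\<^sup>2 - (x + y)\<^sup>2)"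
    and "a = - b \<Longrightarrow> r = 1 \<and> x + y = 0"
proof -
  define e where "e = sgn (b - a)"
  define r x y where "r = chord_radius a e" and "x = a \<bullet> e" and "y = b \<bullet> e"
  note chord = unit_ball_chord_coordinates[OF a b \<open>a \<noteq> b\<close>, folded e_def, folded r_def x_def y_def]
  have "x \<le> y"
    using chord(1) norm_ge_zero[of "a - b"] by simp
  moreover have "hyp_ball_dist a b = 2 * arsinh ((y - x) / sqrt ((r\<^sup>2 - x\<^sup>2) * (r\<^sup>2 - y\<^sup>2)))"
    using chord(1-3) by (simp add: hyp_ball_dist_def)
  moreover have "hilbert_dist (ball 0 1) a b = hilbert_interval r x y"
    using hilbert_dist_unit_ball[OF a b \<open>a \<noteq> b\<close>] by (simp add: e_def r_def x_def y_def)
  moreover have "norm (a - b) / sqrt (4 - (norm (a + b))\<^sup>2) = (y - x) / sqrt (4 * r\<^sup>2 - (x + y)\<^sup>2)"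
    using chord(1,4) by simp
  moreover have "r = 1 \<and> x + y = 0" if "a = - b"
  proof
    have "e = - sgn a"
      using that by (simp add: e_def sgn_minus[symmetric] sgn_scaleR scaleR_2[symmetric])
    then show "r = 1"
      by (simp add: r_def chord_radius_sgn_self)
    show "x + y = 0"
      using that by (simp add: x_def y_def)
  qed
  ultimately show ?thesis
    using that chord(6-8) by blast
qed

theorem corollary3p10:
  fixes a b :: "'a::euclidean_space"
  assumes "a \<in> ball 0 1" and "b \<in> ball 0 1"
  shows "tanh (hyp_ball_dist a b / 4) \<ge> tanh (hilbert_dist (ball 0 1) a b / 4)
       \<and> tanh (hilbert_dist (ball 0 1) a b / 4) \<ge> norm (a - b) / sqrt (4 - (norm (a + b))\<^sup>2)
       \<and> (a = - b \<longrightarrow>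
            tanh (hyp_ball_dist a b / 4) = tanh (hilbert_dist (ball 0 1) a b / 4)
          \<and> tanh (hilbert_dist (ball 0 1) a b / 4) = norm (a - b) / sqrt (4 - (norm (a + b))\<^sup>2))"
proof (cases "a = b")
  case True
  then show ?thesis
    by (simp add: hyp_ball_dist_def hilbert_dist_def)
next
  case False
  have "norm a < 1" "norm b < 1"
    using assms by auto
  then obtain r x y where xy: "\<bar>x\<bar> < r" "\<bar>y\<bar> < r" "x \<le> y" and "r \<le> 1"
    and hyp: "hyp_ball_dist a b = 2 * arsinh ((y - x) / sqrt ((r\<^sup>2 - x\<^sup>2) * (r\<^sup>2 - y\<^sup>2)))"
    and hil: "hilbert_dist (ball 0 1) a b = hilbert_interval r x y"
    and rhs: "norm (a - b) / sqrt (4 - (norm (a + b))\<^sup>2) = (y - x) / sqrt (4 * r\<^sup>2 - (x + y)\<^sup>2)"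
    and antipodal: "a = - b \<Longrightarrow> r = 1 \<and> x + y = 0"
    using unit_ball_chord_reduction[OF _ _ False] by blast
  show ?thesis
    unfolding hyp hil rhs
    using hilbert_interval_le_hyperbolic[OF xy \<open>r \<le> 1\<close>] tanh_quarter_hilbert_interval_ge[OF xy]
      hilbert_interval_unit_eq_hyperbolic tanh_quarter_hilbert_interval_symmetric[OF xy(1,2)]
      antipodal xy
    by auto
qed

end
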